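(* Let $\mathcal{R}$ be a left-linear almost parallel closed TRS. If $t \;{}_{\mathcal{R}}\!\overset{P_1}{\Leftarrow}\; s \overset{P_2}{\Rightarrow}_\mathcal{R} u$, then (i) there exist $v_1$ and a set $P_1'$ of pairwise parallel positions with $t \to_\mathcal{R}^* v_1$, $u \overset{P_1'}{\Rightarrow}_\mathcal{R} v_1$ and $\mathcal{V}ar(v_1,P_1')\subseteq\mathcal{V}ar(s,P_1)$; and (ii) there exist $v_2$ and a set $P_2'$ of pairwise parallel positions with $t \overset{P_2'}{\Rightarrow}_\mathcal{R} v_2$, $u\to_\mathcal{R}^* v_2$ and $\mathcal{V}ar(v_2,P_2')\subseteq\mathcal{V}ar(s,P_2)$.
   Context: Terms over signature $\mathcal{F}$ and variables $\mathcal{V}$; a TRS is a set of rules $\ell\to r$ with $\ell\notin\mathcal{V}$, $\mathcal{V}ar(r)\subseteq\mathcal{V}ar(\ell)$; left-linear means no variable occurs twice in any left-hand side. Positions are sequences of positive integers, $\epsilon$ the root; $p,q$ are parallel if neither is a prefix of the other; $\mathcal{P}os_\mathcal{F}(t)$ are the function-symbol positions of $t$. Parallel step: for a set $P$ of pairwise parallel positions of $s$, $s \overset{P}{\Rightarrow}_\mathcal{R} t$ iff for every $p\in P$ there are a rule $\ell\to r\in\mathcal{R}$ and substitution $\mu$ with $s|_p=\ell\mu$, $t|_p=r\mu$, and $t=s[t|_p]_{p\in P}$; $s\Rightarrow_\mathcal{R}t$ if this holds for some $P$; $t\;{}_{\mathcal{R}}\!\overset{P}{\Leftarrow}\;s$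 means $s\overset{P}{\Rightarrow}_\mathcal{R}t$. $\mathcal{V}ar(t,P)=\bigcup_{p\in P}\mathcal{V}ar(t|_p)$. Critical peak: if $\ell_1\to r_1$ and $\ell_2\to r_2$ are variants (renamings) of rules of $\mathcal{R}$ with no common variables, $p\in\mathcal{P}os_\mathcal{F}(\ell_2)$, $\sigma$ a most general unifier of $\ell_1$ and $\ell_2|_p$, and (if $p=\epsilon$) $\ell_1\to r_1$ is not a variant of $\ell_2\to r_2$, then $(\ell_2\sigma)[r_1\sigma]_p \xleftarrow{p} \ell_2\sigma\xrightarrow{\epsilon} r_2\sigma$ is a critical peak and $((\ell_2\sigma)[r_1\sigma]_p, r_2\sigma)$ a critical pair at position $p$. $\mathcal{R}$ is almost parallel closed if every critical pair $(t,u)$ at position $p=\epsilon$ satisfies $t\Rightarrow_\mathcal{R}\cdot\leftarrow_\mathcal{R}^* u$ (i.e. $t\Rightarrow_\mathcal{R} w$ and $u\to^*_\mathcal{R} w$ for some $w$), and every critical pair $(t,u)$ at a position $p\neq\epsilon$ satisfies $t\Rightarrow_\mathcal{R} u$. *)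

theory Defs
  imports Main "HOL-Library.Sublist"
begin

datatype ('f, 'v) "term" = Var 'v | Fun 'f "('f, 'v) term list"

type_synonym pos = "nat list"
type_synonym ('f, 'v) rule = "('f, 'v) term \<times> ('f, 'v) term"
type_synonym ('f, 'v) trs = "('f, 'v) rule set"
type_synonym ('f, 'v) subst = "'v \<Rightarrow> ('f, 'v) term"

text \<open>Positions are lists of argument indices; argument indices are 0-based
  (index i here corresponds to the paper's positive integer i+1).\<close>

fun vars_term :: "('f, 'v) term \<Rightarrow> 'v set" where
  "vars_term (Var x) = {x}"
| "vars_term (Fun f ts) = (\<Union>t \<in> set ts. vars_term t)"

fun subst_apply :: "('f, 'v) term \<Rightarrow> ('f, 'v) subst \<Rightarrow> ('f, 'v) term" where
  "subst_apply (Var x) \<sigma> = \<sigma> x"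
| "subst_apply (Fun f ts) \<sigma> = Fun f (map (\<lambda>t. subst_apply t \<sigma>) ts)"

definition subst_compose :: "('f, 'v) subst \<Rightarrow> ('f, 'v) subst \<Rightarrow> ('f, 'v) subst" where
  "subst_compose \<sigma> \<tau> = (\<lambda>x. subst_apply (\<sigma> x) \<tau>)"

fun poss :: "('f, 'v) term \<Rightarrow> pos set" where
  "poss (Var x) = {[]}"
| "poss (Fun f ts) = insert [] (\<Union>t \<in> set ts. {i # p | i p. i < length ts \<and> ts ! i = t \<and> p \<in> poss t})"

fun funposs :: "('f, 'v) term \<Rightarrow> pos set" where
  "funposs (Var x) = {}"
| "funposs (Fun f ts) = insert [] (\<Union>t \<in> set ts. {i # p | i p. i < length ts \<and> ts ! i = t \<and> p \<in> funposs t})"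

fun subt_at :: "('f, 'v) term \<Rightarrow> pos \<Rightarrow> ('f, 'v) term" where
  "subt_at t [] = t"
| "subt_at (Fun f ts) (i # p) = subt_at (ts ! i) p"
| "subt_at (Var x) (i # p) = Var x"

fun replace_at :: "('f, 'v) term \<Rightarrow> pos \<Rightarrow> ('f, 'v) term \<Rightarrow> ('f, 'v) term" where
  "replace_at t [] s = s"
| "replace_at (Fun f ts) (i # p) s = Fun f (ts[i := replace_at (ts ! i) p s])"
| "replace_at (Var x) (i # p) s = Var x"

function par_replace :: "('f, 'v) term \<Rightarrow> pos set \<Rightarrow> (pos \<Rightarrow> ('f, 'v) term) \<Rightarrow> ('f, 'v) term" where
  "par_replace s P g =
    (if [] \<in> P then g []
     else (case s of
       Var x \<Rightarrow> Var x
     | Fun f ss \<Rightarrow> Fun f (map (\<lambda>i. par_replace (ss ! i) {q. i # q \<in> P} (\<lambda>q. g (i # q)))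
                              [0..<length ss])))"
  by pat_completeness auto
termination
  by (relation "measure (\<lambda>(s, _, _). size s)")
     (auto simp: less_Suc_eq_le intro!: size_list_estimation' nth_mem)

definition parallel_pos :: "pos \<Rightarrow> pos \<Rightarrow> bool" where
  "parallel_pos p q \<longleftrightarrow> \<not> prefix p q \<and> \<not> prefix q p"

definition pairwise_parallel :: "pos set \<Rightarrow> bool" where
  "pairwise_parallel P \<longleftrightarrow> (\<forall>p \<in> P. \<forall>q \<in> P. p \<noteq> q \<longrightarrow> parallel_pos p q)"

definition vars_at :: "('f, 'v) term \<Rightarrow> pos set \<Rightarrow> 'v set" where
  "vars_at t P = (\<Union>p \<in> P. vars_term (subt_at t p))"

definition wf_trs :: "('f, 'v) trs \<Rightarrow> bool" where
  "wf_trs R \<longleftrightarrow> (\<forall>(l, r) \<in> R. (\<forall>x. l \<noteq> Var x) \<and> vars_term r \<subseteq> vars_term l)"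

fun linear_term :: "('f, 'v) term \<Rightarrow> bool" where
  "linear_term (Var x) = True"
| "linear_term (Fun f ts) = ((\<forall>t \<in> set ts. linear_term t) \<and>
     (\<forall>i < length ts. \<forall>j < length ts. i \<noteq> j \<longrightarrow> vars_term (ts ! i) \<inter> vars_term (ts ! j) = {}))"

definition left_linear :: "('f, 'v) trs \<Rightarrow> bool" where
  "left_linear R \<longleftrightarrow> (\<forall>(l, r) \<in> R. linear_term l)"

definition rstep :: "('f, 'v) trs \<Rightarrow> (('f, 'v) term \<times> ('f, 'v) term) set" where
  "rstep R = {(s, t). \<exists>p \<in> poss s. \<exists>(l, r) \<in> R. \<exists>\<sigma>.
      subt_at s p = subst_apply l \<sigma> \<and> t = replace_at s p (subst_apply r \<sigma>)}"

definition par_step :: "('f, 'v) trs \<Rightarrow> pos set \<Rightarrow> ('f, 'v) term \<Rightarrow> ('f, 'v) term \<Rightarrow> bool" where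
  "par_step R P s t \<longleftrightarrow> P \<subseteq> poss s \<and> pairwise_parallel P \<and>
     (\<forall>p \<in> P. \<exists>(l, r) \<in> R. \<exists>\<mu>. subt_at s p = subst_apply l \<mu> \<and> subt_at t p = subst_apply r \<mu>) \<and>
     t = par_replace s P (subt_at t)"

definition is_renaming :: "('f, 'v) subst \<Rightarrow> bool" where
  "is_renaming \<rho> \<longleftrightarrow> (\<exists>\<pi>. bij \<pi> \<and> \<rho> = (\<lambda>x. Var (\<pi> x)))"

definition is_variant :: "('f, 'v) rule \<Rightarrow> ('f, 'v) rule \<Rightarrow> bool" where
  "is_variant rl rl' \<longleftrightarrow> (\<exists>\<rho>. is_renaming \<rho> \<and>
     fst rl = subst_apply (fst rl') \<rho> \<and> snd rl = subst_apply (snd rl') \<rho>)"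

definition vars_rule :: "('f, 'v) rule \<Rightarrow> 'v set" where
  "vars_rule rl = vars_term (fst rl) \<union> vars_term (snd rl)"

definition is_unifier :: "('f, 'v) subst \<Rightarrow> ('f, 'v) term \<Rightarrow> ('f, 'v) term \<Rightarrow> bool" where
  "is_unifier \<sigma> s t \<longleftrightarrow> subst_apply s \<sigma> = subst_apply t \<sigma>"

definition is_mgu :: "('f, 'v) subst \<Rightarrow> ('f, 'v) term \<Rightarrow> ('f, 'v) term \<Rightarrow> bool" where
  "is_mgu \<sigma> s t \<longleftrightarrow> is_unifier \<sigma> s t \<and>
     (\<forall>\<tau>. is_unifier \<tau> s t \<longrightarrow> (\<exists>\<delta>. \<tau> = subst_compose \<sigma> \<delta>))"

definition critical_pair :: "('f, 'v) trs \<Rightarrow> ('f, 'v) term \<Rightarrow> ('f, 'v) term \<Rightarrow> pos \<Rightarrow> bool" where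
  "critical_pair R t u p \<longleftrightarrow> (\<exists>l1 r1 l2 r2 \<sigma>.
     (\<exists>rl \<in> R. is_variant (l1, r1) rl) \<and> (\<exists>rl \<in> R. is_variant (l2, r2) rl) \<and>
     vars_rule (l1, r1) \<inter> vars_rule (l2, r2) = {} \<and>
     p \<in> funposs l2 \<and> is_mgu \<sigma> l1 (subt_at l2 p) \<and>
     (p = [] \<longrightarrow> \<not> is_variant (l1, r1) (l2, r2)) \<and>
     t = replace_at (subst_apply l2 \<sigma>) p (subst_apply r1 \<sigma>) \<and>
     u = subst_apply r2 \<sigma>)"

definition almost_parallel_closed :: "('f, 'v) trs \<Rightarrow> bool" where
  "almost_parallel_closed R \<longleftrightarrow> (\<forall>t u p. critical_pair R t u p \<longrightarrow>
     (p = [] \<longrightarrow> (\<exists>w. (\<exists>P. par_step R P t w) \<and> (u, w) \<in> (rstep R)\<^sup>*)) \<and>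
     (p \<noteq> [] \<longrightarrow> (\<exists>P. par_step R P t u)))"

end

theory Submission
  imports Defs
begin

text \<open>Proof by induction on the lexicographic pair of the overlap measure and the size of s,
  where the overlap measure adds up the sizes of the subterms of s at those positions of
  \<open>P\<^sub>1 \<union> P\<^sub>2\<close> that lie strictly below another one. Two root steps form an instance of a
  critical pair at the root. A root step against non-root steps either does not overlap them
  --- then, by left-linearity, the inner steps take place inside the matching substitution and
  can be replayed after the root step --- or it overlaps one of them at a function position
  \<open>p \<noteq> \<epsilon>\<close>; the critical pair at p is closed by a single parallel step, which replaces the
  redex at p and leaves a peak of smaller overlap measure. Peaks of two non-root steps split
  into peaks on the arguments. The bound on the variables is an invariant of all cases, and (ii)
  is (i) for the mirrored peak.\<close>

lemma subst_apply_compose: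
  "subst_apply (subst_apply t \<sigma>) \<delta> = subst_apply t (subst_compose \<sigma> \<delta>)"
  by (induction t) (auto simp: subst_compose_def)

lemma subst_apply_Var [simp]: "subst_apply t Var = t"
  by (induction t) (auto simp: map_idI)

lemma vars_term_subst: "vars_term (subst_apply t \<sigma>) = (\<Union>x\<in>vars_term t. vars_term (\<sigma> x))"
  by (induction t) auto

lemma finite_vars_term: "finite (vars_term t)"
  by (induction t) auto

lemma vars_term_nth_subset: "i < length ts \<Longrightarrow> vars_term (ts ! i) \<subseteq> vars_term (Fun f ts)"
  by (auto dest: nth_mem)

lemma subst_apply_cong:
  "(\<And>x. x \<in> vars_term t \<Longrightarrow> \<sigma> x = \<tau> x) \<Longrightarrow> subst_apply t \<sigma> = subst_apply t \<tau>"
  by (induction t) auto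

lemma subst_apply_eq_imp_agree:
  "subst_apply t \<sigma> = subst_apply t \<tau> \<Longrightarrow> x \<in> vars_term t \<Longrightarrow> \<sigma> x = \<tau> x"
proof (induction t)
  case (Fun f ts)
  then obtain t where "t \<in> set ts" "x \<in> vars_term t" by auto
  with Fun show ?case by (simp add: map_eq_conv)
qed simp

lemma poss_Fun: "poss (Fun f ts) = insert [] {i # p | i p. i < length ts \<and> p \<in> poss (ts ! i)}"
  by (auto intro: nth_mem)

lemma funposs_Fun: "funposs (Fun f ts) = insert [] {i # p | i p. i < length ts \<and> p \<in> funposs (ts ! i)}"
  by (auto intro: nth_mem)

declare poss.simps(2) [simp del] funposs.simps(2) [simp del]
declare poss_Fun [simp] funposs_Fun [simp]

lemma Nil_in_poss [simp]: "[] \<in> poss t"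
  by (cases t) auto

lemma finite_poss: "finite (poss t)"
proof (induction t)
  case (Fun f ts)
  have "poss (Fun f ts) \<subseteq> insert [] (\<Union>i<length ts. (#) i ` poss (ts ! i))"
    by auto
  moreover have "finite (\<Union>i<length ts. (#) i ` poss (ts ! i))"
    using Fun by auto
  ultimately show ?case
    by (meson finite_insert finite_subset)
qed simp

lemma finite_subset_poss: "A \<subseteq> poss s \<Longrightarrow> finite A"
  using finite_poss finite_subset by blast

lemma funposs_subset_poss: "p \<in> funposs t \<Longrightarrow> p \<in> poss t"
  by (induction t arbitrary: p) auto

lemma poss_subst_apply: "p \<in> poss t \<Longrightarrow> p \<in> poss (subst_apply t \<sigma>)"
  by (induction t arbitrary: p) auto

lemma subt_at_subst_apply:
  "p \<in> poss t \<Longrightarrow> subt_at (subst_apply t \<sigma>) p = subst_apply (subt_at t p) \<sigma>"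
  by (induction t arbitrary: p) auto

lemma replace_at_subst_apply:
  "p \<in> poss t \<Longrightarrow>
    subst_apply (replace_at t p s) \<sigma> = replace_at (subst_apply t \<sigma>) p (subst_apply s \<sigma>)"
proof (induction t arbitrary: p)
  case (Fun f ts)
  then show ?case
    by (cases p) (auto simp: map_update nth_mem)
qed simp

lemma poss_append:
  "a \<in> poss s \<Longrightarrow>
    (a @ r \<in> poss s \<longleftrightarrow> r \<in> poss (subt_at s a)) \<and> subt_at s (a @ r) = subt_at (subt_at s a) r"
proof (induction s arbitrary: a)
  case (Fun f ss)
  then show ?case
    by (cases a) (auto dest: nth_mem)
qed simp

lemma vars_subt_at_subset: "p \<in> poss t \<Longrightarrow> vars_term (subt_at t p) \<subseteq> vars_term t"
proof (induction t p rule: subt_at.induct)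
  case (2 f ts i p)
  then show ?case
    by (auto dest: nth_mem)
qed auto

lemma vars_replace_at_subset:
  "p \<in> poss s \<Longrightarrow> vars_term (replace_at s p x) \<subseteq> vars_term s \<union> vars_term x"
proof (induction s arbitrary: p)
  case (Fun f ss)
  show ?case
  proof (cases p)
    case (Cons i p')
    with Fun.prems have i: "i < length ss" "p' \<in> poss (ss ! i)"
      by auto
    have "vars_term (replace_at (ss ! i) p' x) \<subseteq> vars_term (ss ! i) \<union> vars_term x"
      using Fun.IH[OF nth_mem[OF i(1)] i(2)] .
    moreover have "vars_term (ss ! i) \<subseteq> vars_term (Fun f ss)"
      using i(1) by (rule vars_term_nth_subset)
    ultimately show ?thesis
      using i Cons by (auto simp: set_conv_nth nth_list_update split: if_splits)
  qed simp
qed auto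

lemma parallel_pos_Cons: "parallel_pos (i # p) (j # q) \<longleftrightarrow> i \<noteq> j \<or> parallel_pos p q"
  by (auto simp: parallel_pos_def)

lemma not_parallel_pos_Nil: "\<not> parallel_pos [] p" "\<not> parallel_pos p []"
  by (auto simp: parallel_pos_def)

lemma parallel_pos_replace_at:
  "parallel_pos p q \<Longrightarrow> p \<in> poss s \<Longrightarrow>
    (q \<in> poss (replace_at s p x) \<longleftrightarrow> q \<in> poss s) \<and> subt_at (replace_at s p x) q = subt_at s q"
proof (induction s arbitrary: p q)
  case (Fun f ss)
  obtain i p' where p: "p = i # p'" "i < length ss" "p' \<in> poss (ss ! i)"
    using Fun.prems by (cases p) (auto simp: not_parallel_pos_Nil)
  obtain j q' where q: "q = j # q'"
    using Fun.prems(1) by (cases q) (auto simp: not_parallel_pos_Nil)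
  show ?case
  proof (cases "i = j")
    case True
    then have "parallel_pos p' q'"
      using Fun.prems(1) p q by (simp add: parallel_pos_Cons)
    then show ?thesis
      using Fun.IH[OF nth_mem[OF p(2)] _ p(3)] p q True by auto
  qed (use p q in \<open>auto simp: nth_list_update\<close>)
qed (simp add: not_parallel_pos_Nil)

lemma pairwise_parallel_subset: "pairwise_parallel A \<Longrightarrow> B \<subseteq> A \<Longrightarrow> pairwise_parallel B"
  unfolding pairwise_parallel_def by blast

lemma pairwise_parallel_root: "pairwise_parallel P \<Longrightarrow> [] \<in> P \<Longrightarrow> P = {[]}"
  unfolding pairwise_parallel_def using not_parallel_pos_Nil by blast

lemma pairwise_parallel_slice: "pairwise_parallel P \<Longrightarrow> pairwise_parallel {q. i # q \<in> P}"
  unfolding pairwise_parallel_def by (metis list.inject mem_Collect_eq parallel_pos_Cons)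

lemma pairwise_parallel_UN_Cons:
  "(\<And>i. i < n \<Longrightarrow> pairwise_parallel (Ps i)) \<Longrightarrow> pairwise_parallel (\<Union>i<n. (#) i ` Ps i)"
  unfolding pairwise_parallel_def by (auto simp: parallel_pos_Cons)

lemma UN_Cons_slices:
  assumes "P \<subseteq> poss (Fun f ss)" and "[] \<notin> P"
  shows "P = (\<Union>i<length ss. (#) i ` {q. i # q \<in> P})"
proof
  show "P \<subseteq> (\<Union>i<length ss. (#) i ` {q. i # q \<in> P})"
  proof
    fix p
    assume "p \<in> P"
    moreover from this obtain i q where "p = i # q" "i < length ss"
      using assms by (cases p) auto
    ultimately show "p \<in> (\<Union>i<length ss. (#) i ` {q. i # q \<in> P})"
      by auto
  qed
qed auto

lemma slice_UN_Cons: "i < n \<Longrightarrow> {q. i # q \<in> (\<Union>j<n. (#) j ` Ps j)} = Ps i"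
  by auto

lemma vars_at_root: "vars_at t {[]} = vars_term t"
  by (simp add: vars_at_def)

lemma vars_at_subset_vars_term: "P \<subseteq> poss t \<Longrightarrow> vars_at t P \<subseteq> vars_term t"
  unfolding vars_at_def using vars_subt_at_subset by blast

lemma vars_at_Fun:
  "n = length ts \<Longrightarrow>
    vars_at (Fun f ts) (\<Union>i<n. (#) i ` Ps i) = (\<Union>i<n. vars_at (ts ! i) (Ps i))"
  unfolding vars_at_def by auto

declare par_replace.simps [simp del]

lemma par_replace_root: "[] \<in> P \<Longrightarrow> par_replace s P g = g []"
  by (subst par_replace.simps) simp

lemma par_replace_Fun:
  "[] \<notin> P \<Longrightarrow> par_replace (Fun f ss) P g =
    Fun f (map (\<lambda>i. par_replace (ss ! i) {q. i # q \<in> P} (\<lambda>q. g (i # q))) [0..<length ss])"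
  by (subst par_replace.simps) simp

lemma par_replace_empty: "par_replace s {} g = s"
proof (induction s arbitrary: g)
  case (Var x)
  then show ?case
    by (subst par_replace.simps) simp
next
  case (Fun f ss)
  then show ?case
    by (auto simp: par_replace_Fun nth_mem intro!: nth_equalityI)
qed

inductive par_rstep :: "('f, 'v) trs \<Rightarrow> pos set \<Rightarrow> ('f, 'v) term \<Rightarrow> ('f, 'v) term \<Rightarrow> bool"
  for R where
  empty: "par_rstep R {} s s"
| root: "(l, r) \<in> R \<Longrightarrow> par_rstep R {[]} (subst_apply l \<sigma>) (subst_apply r \<sigma>)"
| args: "length ts = length ss \<Longrightarrow> (\<And>i. i < length ss \<Longrightarrow> par_rstep R (Ps i) (ss ! i) (ts ! i)) \<Longrightarrow>
    par_rstep R (\<Union>i<length ss. (#) i ` Ps i) (Fun f ss) (Fun f ts)"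

lemma par_stepD:
  assumes "par_step R P s t"
  shows "P \<subseteq> poss s" "pairwise_parallel P" "t = par_replace s P (subt_at t)"
    and "p \<in> P \<Longrightarrow> \<exists>(l, r)\<in>R. \<exists>\<mu>. subt_at s p = subst_apply l \<mu> \<and> subt_at t p = subst_apply r \<mu>"
  using assms unfolding par_step_def by blast+

lemma par_step_Fun:
  assumes len: "length ts = length ss" and steps: "\<And>i. i < length ss \<Longrightarrow> par_step R (Ps i) (ss ! i) (ts ! i)"
  shows "par_step R (\<Union>i<length ss. (#) i ` Ps i) (Fun f ss) (Fun f ts)"
  unfolding par_step_def
proof (intro conjI ballI)
  let ?P = "\<Union>i<length ss. (#) i ` Ps i"
  note D = par_stepD[OF steps]
  show "?P \<subseteq> poss (Fun f ss)" "pairwise_parallel ?P"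
    using D(1,2) by (auto intro: pairwise_parallel_UN_Cons)
  show "\<exists>(l, r)\<in>R. \<exists>\<mu>. subt_at (Fun f ss) p = subst_apply l \<mu> \<and> subt_at (Fun f ts) p = subst_apply r \<mu>"
    if "p \<in> ?P" for p
    using that D(4) by auto
  have "par_replace (ss ! i) {q. i # q \<in> ?P} (\<lambda>q. subt_at (Fun f ts) (i # q)) = ts ! i"
    if "i < length ss" for i
    using that D(3)[OF that] slice_UN_Cons[OF that] by simp
  moreover have "[] \<notin> ?P"
    by auto
  ultimately show "Fun f ts = par_replace (Fun f ss) ?P (subt_at (Fun f ts))"
    using len by (auto simp: par_replace_Fun intro!: nth_equalityI)
qed

lemma par_rstep_imp_par_step: "par_rstep R P s t \<Longrightarrow> par_step R P s t"
proof (induction rule: par_rstep.induct)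
  case (empty s)
  then show ?case
    by (simp add: par_step_def pairwise_parallel_def par_replace_empty)
next
  case (root l r \<sigma>)
  then show ?case
    by (auto simp: par_step_def pairwise_parallel_def par_replace_root)
next
  case (args ts ss Ps f)
  then show ?case
    by (intro par_step_Fun) auto
qed

lemma par_step_FunE:
  assumes step: "par_step R P (Fun f ss) t" and root: "[] \<notin> P"
  obtains ts where "t = Fun f ts" "length ts = length ss"
    "\<And>i. i < length ss \<Longrightarrow> par_step R {q. i # q \<in> P} (ss ! i) (ts ! i)"
proof
  note D = par_stepD[OF step]
  define ts where "ts = map (\<lambda>i. par_replace (ss ! i) {q. i # q \<in> P} (\<lambda>q. subt_at t (i # q))) [0..<length ss]"
  show t: "t = Fun f ts"
    unfolding ts_def by (subst D(3)) (simp add: par_replace_Fun[OF root])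
  show "length ts = length ss"
    by (simp add: ts_def)
  fix i
  assume i: "i < length ss"
  have "ts ! i = par_replace (ss ! i) {q. i # q \<in> P} (\<lambda>q. subt_at t (i # q))"
    using i by (simp add: ts_def)
  then have ti: "ts ! i = par_replace (ss ! i) {q. i # q \<in> P} (subt_at (ts ! i))"
    by (simp add: t)
  show "par_step R {q. i # q \<in> P} (ss ! i) (ts ! i)"
    unfolding par_step_def
  proof (intro conjI ballI)
    show "{q. i # q \<in> P} \<subseteq> poss (ss ! i)"
      using D(1) by auto
    show "pairwise_parallel {q. i # q \<in> P}"
      using D(2) by (rule pairwise_parallel_slice)
    show "\<exists>(l, r)\<in>R. \<exists>\<mu>. subt_at (ss ! i) q = subst_apply l \<mu> \<and> subt_at (ts ! i) q = subst_apply r \<mu>"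
      if "q \<in> {q. i # q \<in> P}" for q
      using D(4)[of "i # q"] that by (simp add: t)
  qed (rule ti)
qed

lemma par_step_imp_par_rstep: "par_step R P s t \<Longrightarrow> par_rstep R P s t"
proof (induction s arbitrary: P t)
  case (Var x)
  note D = par_stepD[OF Var]
  show ?case
  proof (cases "[] \<in> P")
    case True
    then have "P = {[]}"
      using D(1) by auto
    with D(4)[of "[]"] show ?thesis
      by (auto intro: par_rstep.root)
  next
    case False
    then have "P = {}"
      using D(1) by auto
    with D(3) show ?thesis
      by (simp add: par_replace_empty par_rstep.empty)
  qed
next
  case (Fun f ss)
  note D = par_stepD[OF Fun.prems]
  show ?case
  proof (cases "[] \<in> P")
    case True
    with D(2) have "P = {[]}"
      by (rule pairwise_parallel_root)
    with D(4)[of "[]"] show ?thesis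
      by (auto intro: par_rstep.root)
  next
    case False
    obtain ts where "t = Fun f ts" "length ts = length ss"
      "\<And>i. i < length ss \<Longrightarrow> par_step R {q. i # q \<in> P} (ss ! i) (ts ! i)"
      using par_step_FunE[OF Fun.prems False] by blast
    with Fun.IH[OF nth_mem] show ?thesis
      by (subst UN_Cons_slices[OF D(1) False]) (auto intro!: par_rstep.args)
  qed
qed

lemma par_step_iff_par_rstep: "par_step R P s t \<longleftrightarrow> par_rstep R P s t"
  using par_step_imp_par_rstep par_rstep_imp_par_step by blast

lemma par_rstep_poss: "par_rstep R P s t \<Longrightarrow> P \<subseteq> poss s"
  using par_stepD(1) par_rstep_imp_par_step by blast

lemma par_rstep_pairwise_parallel: "par_rstep R P s t \<Longrightarrow> pairwise_parallel P"
  using par_stepD(2) par_rstep_imp_par_step by blast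

lemma par_rstep_redex:
  "par_rstep R P s t \<Longrightarrow> p \<in> P \<Longrightarrow>
    \<exists>(l, r)\<in>R. \<exists>\<mu>. subt_at s p = subst_apply l \<mu> \<and> subt_at t p = subst_apply r \<mu>"
  by (rule par_stepD(4)[OF par_rstep_imp_par_step])

lemma par_rstep_rootE:
  assumes "par_rstep R P s t" and "[] \<in> P"
  obtains l r \<mu> where "P = {[]}" "(l, r) \<in> R" "s = subst_apply l \<mu>" "t = subst_apply r \<mu>"
  using assms by (induction rule: par_rstep.induct) auto

lemma par_rstep_FunE:
  assumes step: "par_rstep R P (Fun f ss) t" and root: "[] \<notin> P"
  obtains ts where "t = Fun f ts" "length ts = length ss"
    "\<And>i. i < length ss \<Longrightarrow> par_rstep R {q. i # q \<in> P} (ss ! i) (ts ! i)"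
  using par_step_FunE[OF par_rstep_imp_par_step[OF step] root] par_step_imp_par_rstep by metis

lemma par_rstep_VarD:
  fixes R :: "('f, 'v) trs"
  assumes wf: "wf_trs R" and "par_rstep R P (Var x) t"
  shows "P = {} \<and> t = Var x"
  using assms(2)
proof (induction P "Var x :: ('f, 'v) term" t rule: par_rstep.induct)
  case (root l r \<sigma>)
  then show ?case
    using wf unfolding wf_trs_def by (cases l) auto
qed auto

lemma par_rstep_subst_apply:
  "par_rstep R P s t \<Longrightarrow> par_rstep R P (subst_apply s \<delta>) (subst_apply t \<delta>)"
proof (induction rule: par_rstep.induct)
  case (root l r \<sigma>)
  then show ?case
    unfolding subst_apply_compose by (rule par_rstep.root)
next
  case (args ts ss Ps f)
  then have "par_rstep R (\<Union>i<length (map (\<lambda>t. subst_apply t \<delta>) ss). (#) i ` Ps i)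
     (Fun f (map (\<lambda>t. subst_apply t \<delta>) ss)) (Fun f (map (\<lambda>t. subst_apply t \<delta>) ts))"
    by (intro par_rstep.args) auto
  then show ?case
    by simp
qed (rule par_rstep.empty)

lemma par_rstep_vars_term:
  assumes wf: "wf_trs R"
  shows "par_rstep R P s t \<Longrightarrow> vars_term t \<subseteq> vars_term s"
proof (induction rule: par_rstep.induct)
  case (root l r \<sigma>)
  then have "vars_term r \<subseteq> vars_term l"
    using wf unfolding wf_trs_def by blast
  then show ?case
    unfolding vars_term_subst by blast
next
  case (args ts ss Ps f)
  then show ?case
    by (fastforce simp: in_set_conv_nth)
qed auto

lemma par_rstep_vars_at:
  assumes wf: "wf_trs R"
  shows "par_rstep R P s t \<Longrightarrow> vars_at t P \<subseteq> vars_at s P"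
proof (induction rule: par_rstep.induct)
  case (root l r \<sigma>)
  then show ?case
    using par_rstep_vars_term[OF wf par_rstep.root] by (simp add: vars_at_root)
next
  case (args ts ss Ps f)
  then show ?case
    unfolding vars_at_Fun[OF refl] vars_at_Fun[OF args(1)[symmetric]] by auto
qed (simp add: vars_at_def)

lemma par_rstep_remove_redex:
  "par_rstep R P s t \<Longrightarrow> p \<in> P \<Longrightarrow> par_rstep R (P - {p}) (replace_at s p (subt_at t p)) t"
proof (induction arbitrary: p rule: par_rstep.induct)
  case (root l r \<sigma>)
  then show ?case
    by (auto intro: par_rstep.empty)
next
  case (args ts ss Ps f)
  from args.prems obtain i p' where ip: "i < length ss" "p' \<in> Ps i" "p = i # p'"
    by blast
  define Ps' where "Ps' j = (if j = i then Ps i - {p'} else Ps j)" for j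
  define ss' where "ss' = ss[i := replace_at (ss ! i) p' (subt_at (ts ! i) p')]"
  have "par_rstep R (\<Union>j<length ss'. (#) j ` Ps' j) (Fun f ss') (Fun f ts)"
    using args ip by (intro par_rstep.args) (auto simp: ss'_def Ps'_def nth_list_update)
  moreover have "(\<Union>j<length ss'. (#) j ` Ps' j) = (\<Union>i<length ss. (#) i ` Ps i) - {p}"
  proof
    show "(\<Union>j<length ss'. (#) j ` Ps' j) \<subseteq> (\<Union>i<length ss. (#) i ` Ps i) - {p}"
      using ip by (auto simp: ss'_def Ps'_def split: if_splits)
    show "(\<Union>i<length ss. (#) i ` Ps i) - {p} \<subseteq> (\<Union>j<length ss'. (#) j ` Ps' j)"
    proof
      fix q
      assume "q \<in> (\<Union>i<length ss. (#) i ` Ps i) - {p}"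
      then obtain j q' where "j < length ss" "q' \<in> Ps j" "q = j # q'" "q \<noteq> p"
        by blast
      then show "q \<in> (\<Union>j<length ss'. (#) j ` Ps' j)"
        using ip by (auto simp: ss'_def Ps'_def)
    qed
  qed
  moreover have "replace_at (Fun f ss) p (subt_at (Fun f ts) p) = Fun f ss'"
    using ip args(1) by (simp add: ss'_def)
  ultimately show ?case
    by simp
qed simp

lemma rstep_root: "(l, r) \<in> R \<Longrightarrow> (subst_apply l \<sigma>, subst_apply r \<sigma>) \<in> rstep R"
  unfolding rstep_def by (intro CollectI case_prodI bexI[of _ "[]"] bexI[of _ "(l, r)"]) auto

lemma rstep_subst_apply:
  assumes "(s, t) \<in> rstep R"
  shows "(subst_apply s \<delta>, subst_apply t \<delta>) \<in> rstep R"
proof -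
  obtain p l r \<sigma> where p: "p \<in> poss s" "(l, r) \<in> R" "subt_at s p = subst_apply l \<sigma>"
    "t = replace_at s p (subst_apply r \<sigma>)"
    using assms unfolding rstep_def by blast
  have "p \<in> poss (subst_apply s \<delta>)"
    using p(1) by (rule poss_subst_apply)
  moreover have "subt_at (subst_apply s \<delta>) p = subst_apply l (subst_compose \<sigma> \<delta>)"
    using p by (simp add: subt_at_subst_apply subst_apply_compose)
  moreover have "subst_apply t \<delta> = replace_at (subst_apply s \<delta>) p (subst_apply r (subst_compose \<sigma> \<delta>))"
    using p by (simp add: replace_at_subst_apply subst_apply_compose)
  ultimately show ?thesis
    unfolding rstep_def using p(2) by blast
qed

lemma rsteps_subst_apply:
  "(s, t) \<in> (rstep R)\<^sup>* \<Longrightarrow> (subst_apply s \<delta>, subst_apply t \<delta>) \<in> (rstep R)\<^sup>*"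
  by (induction rule: rtrancl_induct) (auto intro: rtrancl_into_rtrancl rstep_subst_apply)

lemma rstep_arg:
  assumes "(a, b) \<in> rstep R" and i: "i < length ss"
  shows "(Fun f (ss[i := a]), Fun f (ss[i := b])) \<in> rstep R"
proof -
  obtain p l r \<sigma> where p: "p \<in> poss a" "(l, r) \<in> R" "subt_at a p = subst_apply l \<sigma>"
    "b = replace_at a p (subst_apply r \<sigma>)"
    using assms(1) unfolding rstep_def by blast
  have "i # p \<in> poss (Fun f (ss[i := a]))" "subt_at (Fun f (ss[i := a])) (i # p) = subst_apply l \<sigma>"
    "Fun f (ss[i := b]) = replace_at (Fun f (ss[i := a])) (i # p) (subst_apply r \<sigma>)"
    using p i by simp_all
  then show ?thesis
    unfolding rstep_def using p(2) by blast
qed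

lemma rsteps_arg:
  "(a, b) \<in> (rstep R)\<^sup>* \<Longrightarrow> i < length ss \<Longrightarrow> (Fun f (ss[i := a]), Fun f (ss[i := b])) \<in> (rstep R)\<^sup>*"
  by (induction rule: rtrancl_induct) (auto intro: rtrancl_into_rtrancl rstep_arg)

lemma rsteps_args_append:
  "list_all2 (\<lambda>a b. (a, b) \<in> (rstep R)\<^sup>*) ss ts \<Longrightarrow> (Fun f (xs @ ss), Fun f (xs @ ts)) \<in> (rstep R)\<^sup>*"
proof (induction ss ts arbitrary: xs rule: list_all2_induct)
  case (Cons a ss b ts)
  have "(Fun f ((xs @ a # ss)[length xs := a]), Fun f ((xs @ a # ss)[length xs := b])) \<in> (rstep R)\<^sup>*"
    using Cons(1) by (intro rsteps_arg) auto
  moreover have "(Fun f ((xs @ [b]) @ ss), Fun f ((xs @ [b]) @ ts)) \<in> (rstep R)\<^sup>*"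
    by (rule Cons(3))
  ultimately show ?case
    by (simp add: rtrancl_trans)
qed simp

lemma rsteps_args:
  "length ss = length ts \<Longrightarrow> (\<And>i. i < length ss \<Longrightarrow> (ss ! i, ts ! i) \<in> (rstep R)\<^sup>*) \<Longrightarrow>
    (Fun f ss, Fun f ts) \<in> (rstep R)\<^sup>*"
  using rsteps_args_append[where xs = "[]" and R = R and f = f] by (auto simp: list_all2_conv_all_nth)

lemma par_rstep_imp_rsteps: "par_rstep R P s t \<Longrightarrow> (s, t) \<in> (rstep R)\<^sup>*"
  by (induction rule: par_rstep.induct) (auto intro: rstep_root rsteps_args)

section \<open>Unification of linear terms\<close>

definition is_idem_mgu :: "('f, 'v) subst \<Rightarrow> ('f, 'v) term \<Rightarrow> ('f, 'v) term \<Rightarrow> bool" where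
  "is_idem_mgu \<sigma> a b \<longleftrightarrow> is_unifier \<sigma> a b \<and> (\<forall>\<tau>. is_unifier \<tau> a b \<longrightarrow> subst_compose \<sigma> \<tau> = \<tau>)"

lemma is_idem_mgu_imp_is_mgu: "is_idem_mgu \<sigma> a b \<Longrightarrow> is_mgu \<sigma> a b"
  unfolding is_idem_mgu_def is_mgu_def by metis

lemma is_idem_mgu_sym: "is_idem_mgu \<sigma> a b \<longleftrightarrow> is_idem_mgu \<sigma> b a"
  unfolding is_idem_mgu_def is_unifier_def by auto

lemma is_idem_mgu_Var:
  assumes "x \<notin> vars_term b"
  shows "is_idem_mgu (Var(x := b)) (Var x) b"
proof -
  have "subst_apply b (Var(x := b)) = subst_apply b Var"
    using assms by (intro subst_apply_cong) auto
  then have "subst_apply b (Var(x := b)) = b"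
    by simp
  then show ?thesis
    unfolding is_idem_mgu_def is_unifier_def by (auto simp: subst_compose_def)
qed

lemma linear_term_subt_at: "linear_term t \<Longrightarrow> p \<in> poss t \<Longrightarrow> linear_term (subt_at t p)"
proof (induction t arbitrary: p)
  case (Fun f ts)
  then show ?case
    by (cases p) (auto dest: nth_mem)
qed simp

lemma linear_term_rename:
  "inj \<pi> \<Longrightarrow> linear_term t \<Longrightarrow> linear_term (subst_apply t (\<lambda>x. Var (\<pi> x)))"
proof (induction t)
  case (Fun f ts)
  have "vars_term (subst_apply (ts ! i) (\<lambda>x. Var (\<pi> x))) = \<pi> ` vars_term (ts ! i)" for i
    by (auto simp: vars_term_subst)
  with Fun show ?case
    by (auto simp: image_Int[OF Fun(2), symmetric])
qed simp

lemma merge_on_disjoint_sets: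
  assumes "\<And>i j x. i < n \<Longrightarrow> j < n \<Longrightarrow> x \<in> V i \<Longrightarrow> x \<in> V j \<Longrightarrow> i = j"
  shows "\<exists>h. (\<forall>i<n. \<forall>x\<in>V i. h x = g i x) \<and> (\<forall>x. (\<forall>i<n. x \<notin> V i) \<longrightarrow> h x = d x)"
proof (intro exI conjI allI ballI impI)
  define h where "h x = (if \<exists>i < n. x \<in> V i then g (SOME i. i < n \<and> x \<in> V i) x else d x)" for x
  show "h x = g i x" if "i < n" "x \<in> V i" for i x
  proof -
    have "(SOME i. i < n \<and> x \<in> V i) = i"
      using that assms by (intro some_equality) auto
    with that show ?thesis
      by (auto simp: h_def)
  qed
  show "h x = d x" if "\<forall>i<n. x \<notin> V i" for x
    using that by (auto simp: h_def)
qed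

lemma is_idem_mgu_Fun:
  assumes len: "length as = length bs"
    and disj: "\<And>i j x. i < length as \<Longrightarrow> j < length as \<Longrightarrow> x \<in> vars_term (as ! i) \<union> vars_term (bs ! i) \<Longrightarrow>
      x \<in> vars_term (as ! j) \<union> vars_term (bs ! j) \<Longrightarrow> i = j"
    and mgus: "\<And>i. i < length as \<Longrightarrow> is_idem_mgu (\<sigma>s i) (as ! i) (bs ! i)"
  obtains \<sigma> where "is_idem_mgu \<sigma> (Fun f as) (Fun f bs)"
proof -
  let ?n = "length as"
  have "\<exists>\<sigma>. (\<forall>i<?n. \<forall>x\<in>vars_term (as ! i) \<union> vars_term (bs ! i). \<sigma> x = \<sigma>s i x) \<and>
      (\<forall>x. (\<forall>i<?n. x \<notin> vars_term (as ! i) \<union> vars_term (bs ! i)) \<longrightarrow> \<sigma> x = Var x)"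
    by (rule merge_on_disjoint_sets) (rule disj)
  then obtain \<sigma> where \<sigma>: "\<And>i x. i < ?n \<Longrightarrow> x \<in> vars_term (as ! i) \<union> vars_term (bs ! i) \<Longrightarrow> \<sigma> x = \<sigma>s i x"
    and outside: "\<And>x. \<forall>i<?n. x \<notin> vars_term (as ! i) \<union> vars_term (bs ! i) \<Longrightarrow> \<sigma> x = Var x"
    by blast
  have args_unifier: "is_unifier \<tau> (as ! i) (bs ! i)" if "is_unifier \<tau> (Fun f as) (Fun f bs)" "i < ?n" for \<tau> i
    using that len by (simp add: is_unifier_def list_eq_iff_nth_eq)
  have "subst_apply (as ! i) \<sigma> = subst_apply (bs ! i) \<sigma>" if i: "i < ?n" for i
  proof -
    have "subst_apply (as ! i) \<sigma> = subst_apply (as ! i) (\<sigma>s i)" "subst_apply (bs ! i) \<sigma> = subst_apply (bs ! i) (\<sigma>s i)"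
      using \<sigma>[OF i] by (auto intro!: subst_apply_cong)
    with mgus[OF i] show ?thesis
      unfolding is_idem_mgu_def is_unifier_def by simp
  qed
  then have "is_unifier \<sigma> (Fun f as) (Fun f bs)"
    using len unfolding is_unifier_def by (auto intro!: nth_equalityI)
  moreover have "subst_compose \<sigma> \<tau> = \<tau>" if \<tau>: "is_unifier \<tau> (Fun f as) (Fun f bs)" for \<tau>
  proof
    fix x
    show "subst_compose \<sigma> \<tau> x = \<tau> x"
    proof (cases "\<exists>i < ?n. x \<in> vars_term (as ! i) \<union> vars_term (bs ! i)")
      case True
      then obtain i where i: "i < ?n" "x \<in> vars_term (as ! i) \<union> vars_term (bs ! i)"
        by blast
      have "subst_compose (\<sigma>s i) \<tau> = \<tau>"
        using mgus[OF i(1)] args_unifier[OF \<tau> i(1)] unfolding is_idem_mgu_def by blast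
      then show ?thesis
        using \<sigma>[OF i] by (simp add: subst_compose_def fun_eq_iff)
    qed (use outside in \<open>auto simp: subst_compose_def\<close>)
  qed
  ultimately show thesis
    by (intro that[of \<sigma>]) (simp add: is_idem_mgu_def)
qed

text \<open>Corresponding arguments of variable-disjoint linear terms have variables disjoint from
  all other arguments, so their idempotent mgus can be merged.\<close>

lemma linear_unifiable_imp_is_idem_mgu:
  assumes "linear_term a" "linear_term b" "vars_term a \<inter> vars_term b = {}"
    and "subst_apply a \<tau> = subst_apply b \<tau>"
  shows "\<exists>\<sigma>. is_idem_mgu \<sigma> a b"
  using assms
proof (induction a arbitrary: b \<tau>)
  case (Var x)
  then show ?case
    using is_idem_mgu_Var[of x b] by auto
next
  case (Fun f as)
  show ?case
  proof (cases b)
    case (Var y)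
    then have "y \<notin> vars_term (Fun f as)"
      using Fun.prems(3) by auto
    then show ?thesis
      using is_idem_mgu_Var is_idem_mgu_sym Var by metis
  next
    case b: (Fun g bs)
    have fg: "f = g" and len: "length as = length bs"
      using Fun.prems(4) b by (auto dest: map_eq_imp_length_eq)
    let ?n = "length as"
    have disj: "vars_term (as ! i) \<inter> vars_term (bs ! j) = {}" if "i < ?n" "j < ?n" for i j
      using Fun.prems(3) b that len vars_term_nth_subset[of i as f] vars_term_nth_subset[of j bs g] by auto
    have "\<exists>\<sigma>. is_idem_mgu \<sigma> (as ! i) (bs ! i)" if i: "i < ?n" for i
    proof (rule Fun.IH[OF nth_mem[OF i]])
      show "linear_term (as ! i)" "linear_term (bs ! i)"
        using Fun.prems(1,2) b i len by (auto dest: nth_mem)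
      show "vars_term (as ! i) \<inter> vars_term (bs ! i) = {}"
        using disj i by blast
      show "subst_apply (as ! i) \<tau> = subst_apply (bs ! i) \<tau>"
        using Fun.prems(4) b i len by (simp add: list_eq_iff_nth_eq)
    qed
    then obtain \<sigma>s where \<sigma>s: "\<And>i. i < ?n \<Longrightarrow> is_idem_mgu (\<sigma>s i) (as ! i) (bs ! i)"
      by metis
    have disjoint: "i = j" if "i < ?n" "j < ?n" "x \<in> vars_term (as ! i) \<union> vars_term (bs ! i)"
      "x \<in> vars_term (as ! j) \<union> vars_term (bs ! j)" for i j x
    proof (rule ccontr)
      assume "i \<noteq> j"
      then have "vars_term (as ! i) \<inter> vars_term (as ! j) = {}" "vars_term (bs ! i) \<inter> vars_term (bs ! j) = {}"
        using Fun.prems(1,2) b len that(1,2) by simp_all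
      then show False
        using disj[OF that(1,2)] disj[OF that(2,1)] that(3,4) by blast
    qed
    obtain \<sigma> where "is_idem_mgu \<sigma> (Fun f as) (Fun f bs)"
      by (rule is_idem_mgu_Fun[OF len disjoint \<sigma>s])
    with b fg show ?thesis
      by blast
  qed
qed

lemma exists_bij_image_disjoint:
  assumes inf: "infinite (UNIV :: 'v set)" and A: "finite (A :: 'v set)" and B: "finite (B :: 'v set)"
  obtains \<pi> where "bij \<pi>" "\<pi> ` A \<inter> B = {}"
proof -
  have "infinite (UNIV - (A \<union> B))"
    using inf A B by (simp add: Diff_infinite_finite)
  then obtain D where D: "finite D" "card D = card A" "D \<subseteq> UNIV - (A \<union> B)"
    using infinite_arbitrarily_large by blast
  then obtain g where "bij_betw g A D"
    using A finite_same_card_bij by metis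
  then have gA: "g ` A = D" and g: "inj_on g A"
    by (auto simp: bij_betw_def)
  define \<pi> where "\<pi> x = (if x \<in> A then g x else if x \<in> D then inv_into A g x else x)" for x
  have "\<pi> (\<pi> x) = x" for x
    using D(3) gA g by (auto simp: \<pi>_def inv_into_into f_inv_into_f)
  then have "bij \<pi>"
    by (metis o_bij comp_apply id_apply ext)
  moreover have "\<pi> ` A \<inter> B = {}"
    using D gA by (auto simp: \<pi>_def)
  ultimately show thesis
    by (rule that)
qed

lemma rename_rule_apart:
  fixes l r :: "('f, 'v) term"
  assumes inf: "infinite (UNIV :: 'v set)" and V: "finite V"
  obtains l' r' where "is_variant (l', r') (l, r)" "vars_rule (l', r') \<inter> V = {}"
    "linear_term l \<Longrightarrow> linear_term l'"
    "\<And>\<mu>' \<mu>. \<exists>\<tau>. subst_apply l' \<tau> = subst_apply l \<mu>' \<and> subst_apply r' \<tau> = subst_apply r \<mu>' \<and>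
       (\<forall>x\<in>V. \<tau> x = \<mu> x)"
proof -
  obtain \<pi> where \<pi>: "bij \<pi>" "\<pi> ` vars_rule (l, r) \<inter> V = {}"
    using exists_bij_image_disjoint[OF inf _ V] finite_vars_term by (metis vars_rule_def finite_Un)
  define \<rho> where "\<rho> = (\<lambda>x. Var (\<pi> x) :: ('f, 'v) term)"
  have inj: "inj \<pi>"
    using \<pi>(1) by (rule bij_is_inj)
  have "is_variant (subst_apply l \<rho>, subst_apply r \<rho>) (l, r)"
    unfolding is_variant_def is_renaming_def \<rho>_def using \<pi>(1) by auto
  moreover have "vars_rule (subst_apply l \<rho>, subst_apply r \<rho>) \<inter> V = {}"
    using \<pi>(2) by (auto simp: vars_rule_def \<rho>_def vars_term_subst)
  moreover have "linear_term l \<Longrightarrow> linear_term (subst_apply l \<rho>)"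
    unfolding \<rho>_def by (rule linear_term_rename[OF inj])
  moreover have "\<exists>\<tau>. subst_apply (subst_apply l \<rho>) \<tau> = subst_apply l \<mu>' \<and>
      subst_apply (subst_apply r \<rho>) \<tau> = subst_apply r \<mu>' \<and> (\<forall>x\<in>V. \<tau> x = \<mu> x)" for \<mu>' \<mu>
  proof (intro exI conjI)
    define \<tau> where "\<tau> y = (if y \<in> \<pi> ` vars_rule (l, r) then \<mu>' (inv \<pi> y) else \<mu> y)" for y
    have "subst_compose \<rho> \<tau> x = \<mu>' x" if "x \<in> vars_rule (l, r)" for x
      using that inj by (simp add: subst_compose_def \<rho>_def \<tau>_def)
    then show "subst_apply (subst_apply l \<rho>) \<tau> = subst_apply l \<mu>'"
      "subst_apply (subst_apply r \<rho>) \<tau> = subst_apply r \<mu>'"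
      unfolding subst_apply_compose by (auto intro: subst_apply_cong simp: vars_rule_def)
    show "\<forall>x\<in>V. \<tau> x = \<mu> x"
      using \<pi>(2) by (auto simp: \<tau>_def)
  qed
  ultimately show thesis
    by (rule that)
qed

lemma is_variant_refl: "is_variant rl rl"
  unfolding is_variant_def is_renaming_def by (intro exI[of _ Var]) (auto intro: exI[of _ id])

lemma variant_instance_rhs_eq:
  assumes rl: "vars_term r \<subseteq> vars_term l" and variant: "is_variant (l', r') (l, r)"
    and lhs: "subst_apply l' \<tau> = subst_apply l \<mu>"
  shows "subst_apply r' \<tau> = subst_apply r \<mu>"
proof -
  obtain \<rho> where \<rho>: "l' = subst_apply l \<rho>" "r' = subst_apply r \<rho>"
    using variant unfolding is_variant_def by auto
  have "subst_compose \<rho> \<tau> x = \<mu> x" if "x \<in> vars_term l" for x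
    using lhs that unfolding \<rho>(1) subst_apply_compose by (rule subst_apply_eq_imp_agree)
  with rl show ?thesis
    unfolding \<rho>(2) subst_apply_compose by (auto intro: subst_apply_cong)
qed

locale left_linear_trs =
  fixes R :: "('f, 'v) trs"
  assumes infinite_vars: "infinite (UNIV :: 'v set)"
    and wf: "wf_trs R"
    and left_linear: "left_linear R"
begin

lemma linear_lhs: "(l, r) \<in> R \<Longrightarrow> linear_term l"
  using left_linear unfolding left_linear_def by blast

lemma vars_rhs_subset: "(l, r) \<in> R \<Longrightarrow> vars_term r \<subseteq> vars_term l"
  using wf unfolding wf_trs_def by blast

lemma overlap_renamed_apart:
  assumes lr: "(l, r) \<in> R" and lr1: "(l1, r1) \<in> R" and pp: "p \<in> poss l"
    and overlap: "subt_at (subst_apply l \<mu>) p = subst_apply l1 \<mu>1"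
  obtains l1' r1' \<tau> \<sigma> where "is_variant (l1', r1') (l1, r1)" "vars_rule (l1', r1') \<inter> vars_rule (l, r) = {}"
    "subst_apply l1' \<tau> = subst_apply l1 \<mu>1" "subst_apply r1' \<tau> = subst_apply r1 \<mu>1"
    "subst_apply l \<tau> = subst_apply l \<mu>" "subst_apply r \<tau> = subst_apply r \<mu>"
    "is_idem_mgu \<sigma> l1' (subt_at l p)" "subst_compose \<sigma> \<tau> = \<tau>"
proof -
  obtain l1' r1' where variant: "is_variant (l1', r1') (l1, r1)"
    and disj: "vars_rule (l1', r1') \<inter> vars_rule (l, r) = {}"
    and lin1: "linear_term l1'"
    and inst: "\<And>\<mu>' \<mu>. \<exists>\<tau>. subst_apply l1' \<tau> = subst_apply l1 \<mu>' \<and> subst_apply r1' \<tau> = subst_apply r1 \<mu>' \<and>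
       (\<forall>x\<in>vars_rule (l, r). \<tau> x = \<mu> x)"
    using rename_rule_apart[OF infinite_vars, of "vars_rule (l, r)" l1 r1] linear_lhs[OF lr1]
    by (metis finite_Un finite_vars_term vars_rule_def)
  obtain \<tau> where \<tau>1: "subst_apply l1' \<tau> = subst_apply l1 \<mu>1" "subst_apply r1' \<tau> = subst_apply r1 \<mu>1"
    and \<tau>: "\<And>x. x \<in> vars_rule (l, r) \<Longrightarrow> \<tau> x = \<mu> x"
    using inst by blast
  have \<tau>_lr: "subst_apply l \<tau> = subst_apply l \<mu>" "subst_apply r \<tau> = subst_apply r \<mu>"
    using \<tau> by (auto intro!: subst_apply_cong simp: vars_rule_def)
  have unifier: "subst_apply l1' \<tau> = subst_apply (subt_at l p) \<tau>"
    unfolding \<tau>1 subt_at_subst_apply[OF pp, symmetric] \<tau>_lr overlap ..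
  moreover have "vars_term l1' \<inter> vars_term (subt_at l p) = {}"
    using disj vars_subt_at_subset[OF pp] by (auto simp: vars_rule_def)
  ultimately obtain \<sigma> where mgu: "is_idem_mgu \<sigma> l1' (subt_at l p)"
    using linear_unifiable_imp_is_idem_mgu lin1 linear_term_subt_at[OF linear_lhs[OF lr] pp] by blast
  then have "subst_compose \<sigma> \<tau> = \<tau>"
    using unifier unfolding is_idem_mgu_def is_unifier_def by blast
  with variant disj \<tau>1 \<tau>_lr mgu show thesis
    by (rule that)
qed

lemma overlap_instance_of_critical_pair:
  assumes lr: "(l, r) \<in> R" and lr1: "(l1, r1) \<in> R" and p: "p \<in> funposs l"
    and overlap: "subt_at (subst_apply l \<mu>) p = subst_apply l1 \<mu>1"
  shows "replace_at (subst_apply l \<mu>) p (subst_apply r1 \<mu>1) = subst_apply r \<mu> \<or>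
    (\<exists>t' u' \<delta>. critical_pair R t' u' p \<and>
       subst_apply t' \<delta> = replace_at (subst_apply l \<mu>) p (subst_apply r1 \<mu>1) \<and>
       subst_apply u' \<delta> = subst_apply r \<mu>)"
proof -
  have pp: "p \<in> poss l"
    using p by (rule funposs_subset_poss)
  obtain l1' r1' \<tau> \<sigma> where variant: "is_variant (l1', r1') (l1, r1)"
    and disj: "vars_rule (l1', r1') \<inter> vars_rule (l, r) = {}"
    and \<tau>1: "subst_apply l1' \<tau> = subst_apply l1 \<mu>1" "subst_apply r1' \<tau> = subst_apply r1 \<mu>1"
    and \<tau>_lr: "subst_apply l \<tau> = subst_apply l \<mu>" "subst_apply r \<tau> = subst_apply r \<mu>"
    and mgu: "is_idem_mgu \<sigma> l1' (subt_at l p)" and \<sigma>\<tau>: "subst_compose \<sigma> \<tau> = \<tau>"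
    by (rule overlap_renamed_apart[OF lr lr1 pp overlap])
  show ?thesis
  proof (cases "p = [] \<and> is_variant (l1', r1') (l, r)")
    case True
    then have "subst_apply l1' \<tau> = subst_apply l \<mu>"
      using \<tau>1(1) overlap by simp
    then have "subst_apply r1' \<tau> = subst_apply r \<mu>"
      using variant_instance_rhs_eq[OF vars_rhs_subset[OF lr]] True by blast
    then show ?thesis
      using True \<tau>1(2) by simp
  next
    case False
    define t' where "t' = replace_at (subst_apply l \<sigma>) p (subst_apply r1' \<sigma>)"
    have "critical_pair R t' (subst_apply r \<sigma>) p"
      unfolding critical_pair_def t'_def
      using variant is_variant_refl lr lr1 disj p is_idem_mgu_imp_is_mgu[OF mgu] False by blast
    moreover have "subst_apply t' \<tau> = replace_at (subst_apply l \<mu>) p (subst_apply r1 \<mu>1)"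
      unfolding t'_def replace_at_subst_apply[OF poss_subst_apply[OF pp]] subst_apply_compose \<sigma>\<tau> \<tau>_lr \<tau>1 ..
    moreover have "subst_apply (subst_apply r \<sigma>) \<tau> = subst_apply r \<mu>"
      unfolding subst_apply_compose \<sigma>\<tau> \<tau>_lr ..
    ultimately show ?thesis
      by blast
  qed
qed

end

locale almost_parallel_closed_trs = left_linear_trs +
  assumes almost_parallel_closed: "almost_parallel_closed R"
begin

lemma inner_overlap_par_rstep:
  assumes lr: "(l, r) \<in> R" and lr1: "(l1, r1) \<in> R" and p: "p \<in> funposs l" "p \<noteq> []"
    and overlap: "subt_at (subst_apply l \<mu>) p = subst_apply l1 \<mu>1"
  obtains Q where "par_rstep R Q (replace_at (subst_apply l \<mu>) p (subst_apply r1 \<mu>1)) (subst_apply r \<mu>)"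
proof (cases "replace_at (subst_apply l \<mu>) p (subst_apply r1 \<mu>1) = subst_apply r \<mu>")
  case True
  show thesis
    by (rule that[of "{}"]) (simp add: True par_rstep.empty)
next
  case False
  then obtain t' u' \<delta> where cp: "critical_pair R t' u' p"
    "subst_apply t' \<delta> = replace_at (subst_apply l \<mu>) p (subst_apply r1 \<mu>1)"
    "subst_apply u' \<delta> = subst_apply r \<mu>"
    using overlap_instance_of_critical_pair[OF lr lr1 p(1) overlap] by blast
  have "p \<noteq> [] \<longrightarrow> (\<exists>Q. par_step R Q t' u')"
    using almost_parallel_closed cp(1) unfolding almost_parallel_closed_def by blast
  then obtain Q where "par_step R Q t' u'"
    using p(2) by blast
  then have "par_rstep R Q (subst_apply t' \<delta>) (subst_apply u' \<delta>)"
    by (intro par_rstep_subst_apply par_step_imp_par_rstep)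
  then show thesis
    unfolding cp(2,3) by (rule that)
qed

lemma root_overlap_joinable:
  assumes lr: "(l, r) \<in> R" and lr1: "(l1, r1) \<in> R"
    and overlap: "subst_apply l \<mu> = subst_apply l1 \<mu>1"
  obtains v Q where "par_rstep R Q (subst_apply r1 \<mu>1) v" "(subst_apply r \<mu>, v) \<in> (rstep R)\<^sup>*"
proof (cases "subst_apply r1 \<mu>1 = subst_apply r \<mu>")
  case True
  show thesis
    using that[of "{}" "subst_apply r \<mu>"] True by (simp add: par_rstep.empty)
next
  case False
  have "[] \<in> funposs l"
    using wf lr unfolding wf_trs_def by (cases l) auto
  then obtain t' u' \<delta> where cp: "critical_pair R t' u' []"
    "subst_apply t' \<delta> = subst_apply r1 \<mu>1" "subst_apply u' \<delta> = subst_apply r \<mu>"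
    using overlap_instance_of_critical_pair[OF lr lr1, of "[]" \<mu> \<mu>1] overlap False by auto
  have "\<exists>w. (\<exists>Q. par_step R Q t' w) \<and> (u', w) \<in> (rstep R)\<^sup>*"
    using almost_parallel_closed cp(1) unfolding almost_parallel_closed_def by blast
  then obtain w Q where w: "par_step R Q t' w" "(u', w) \<in> (rstep R)\<^sup>*"
    by blast
  have "par_rstep R Q (subst_apply t' \<delta>) (subst_apply w \<delta>)"
    using w(1) by (intro par_rstep_subst_apply par_step_imp_par_rstep)
  moreover have "(subst_apply u' \<delta>, subst_apply w \<delta>) \<in> (rstep R)\<^sup>*"
    using w(2) by (rule rsteps_subst_apply)
  ultimately show thesis
    unfolding cp(2,3) by (rule that)
qed

end

lemma par_rstep_subst_apply_linear:
  "linear_term l \<Longrightarrow> par_rstep R P (subst_apply l \<mu>) t \<Longrightarrow> P \<inter> funposs l = {} \<Longrightarrow>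
    \<exists>\<mu>' Px. t = subst_apply l \<mu>' \<and>
      (\<forall>x\<in>vars_term l. par_rstep R (Px x) (\<mu> x) (\<mu>' x) \<and> vars_at (\<mu>' x) (Px x) \<subseteq> vars_at t P)"
proof (induction l arbitrary: P t)
  case (Var x)
  then show ?case
    by (intro exI[of _ "\<lambda>_. t"] exI[of _ "\<lambda>_. P"]) auto
next
  case (Fun f ls)
  let ?n = "length ls"
  have "[] \<notin> P"
    using Fun.prems(3) by auto
  with Fun.prems(2) obtain ts where ts: "t = Fun f ts" "length ts = ?n"
    "\<And>i. i < ?n \<Longrightarrow> par_rstep R {q. i # q \<in> P} (subst_apply (ls ! i) \<mu>) (ts ! i)"
    by (auto elim!: par_rstep_FunE)
  have "\<exists>\<mu>' Px. ts ! i = subst_apply (ls ! i) \<mu>' \<and>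
      (\<forall>x\<in>vars_term (ls ! i). par_rstep R (Px x) (\<mu> x) (\<mu>' x) \<and>
         vars_at (\<mu>' x) (Px x) \<subseteq> vars_at (ts ! i) {q. i # q \<in> P})"
    if i: "i < ?n" for i
  proof (rule Fun.IH[OF nth_mem[OF i] _ ts(3)[OF i]])
    show "linear_term (ls ! i)"
      using Fun.prems(1) i by simp
    show "{q. i # q \<in> P} \<inter> funposs (ls ! i) = {}"
      using Fun.prems(3) i by auto
  qed
  then obtain M X where MX: "\<And>i. i < ?n \<Longrightarrow> ts ! i = subst_apply (ls ! i) (M i) \<and>
      (\<forall>x\<in>vars_term (ls ! i). par_rstep R (X i x) (\<mu> x) (M i x) \<and>
         vars_at (M i x) (X i x) \<subseteq> vars_at (ts ! i) {q. i # q \<in> P})"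
    by metis
  have index_unique: "i = j" if "i < ?n" "j < ?n" "x \<in> vars_term (ls ! i)" "x \<in> vars_term (ls ! j)" for i j x
    using Fun.prems(1) that by auto
  define index where "index x = (SOME i. i < ?n \<and> x \<in> vars_term (ls ! i))" for x
  have index: "index x = i" if "i < ?n" "x \<in> vars_term (ls ! i)" for i x
    unfolding index_def using that index_unique by (intro some_equality) auto
  define \<mu>' where "\<mu>' x = M (index x) x" for x
  define Px where "Px x = X (index x) x" for x
  have "ts ! i = subst_apply (ls ! i) \<mu>'" if i: "i < ?n" for i
    using MX[OF i] index[OF i] by (auto intro!: subst_apply_cong simp: \<mu>'_def)
  then have "t = subst_apply (Fun f ls) \<mu>'"
    using ts(1,2) by (auto intro!: nth_equalityI)
  moreover have "par_rstep R (Px x) (\<mu> x) (\<mu>' x) \<and> vars_at (\<mu>' x) (Px x) \<subseteq> vars_at t P"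
    if x: "x \<in> vars_term (Fun f ls)" for x
  proof -
    obtain i where i: "i < ?n" "x \<in> vars_term (ls ! i)"
      using x by (auto simp: in_set_conv_nth)
    have "vars_at (ts ! i) {q. i # q \<in> P} \<subseteq> vars_at t P"
      unfolding vars_at_def ts(1) by auto
    moreover have "par_rstep R (X i x) (\<mu> x) (M i x) \<and> vars_at (M i x) (X i x) \<subseteq> vars_at (ts ! i) {q. i # q \<in> P}"
      using MX[OF i(1)] i(2) by blast
    ultimately show ?thesis
      unfolding \<mu>'_def Px_def index[OF i] by blast
  qed
  ultimately show ?case
    by blast
qed

lemma par_rstep_subst_apply_args:
  "(\<And>x. x \<in> vars_term r \<Longrightarrow> par_rstep R (Px x) (\<mu> x) (\<mu>' x)) \<Longrightarrow>
    \<exists>Q. par_rstep R Q (subst_apply r \<mu>) (subst_apply r \<mu>') \<and>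
      vars_at (subst_apply r \<mu>') Q \<subseteq> (\<Union>x\<in>vars_term r. vars_at (\<mu>' x) (Px x))"
proof (induction r)
  case (Var x)
  then show ?case
    by auto
next
  case (Fun f rs)
  let ?V = "\<Union>x\<in>vars_term (Fun f rs). vars_at (\<mu>' x) (Px x)"
  have "\<exists>Q. par_rstep R Q (subst_apply (rs ! i) \<mu>) (subst_apply (rs ! i) \<mu>') \<and>
     vars_at (subst_apply (rs ! i) \<mu>') Q \<subseteq> ?V"
    if i: "i < length rs" for i
  proof -
    have "x \<in> vars_term (rs ! i) \<Longrightarrow> par_rstep R (Px x) (\<mu> x) (\<mu>' x)" for x
      using Fun.prems vars_term_nth_subset[OF i] by blast
    then obtain Q where "par_rstep R Q (subst_apply (rs ! i) \<mu>) (subst_apply (rs ! i) \<mu>')"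
      "vars_at (subst_apply (rs ! i) \<mu>') Q \<subseteq> (\<Union>x\<in>vars_term (rs ! i). vars_at (\<mu>' x) (Px x))"
      using Fun.IH[OF nth_mem[OF i]] by blast
    moreover have "(\<Union>x\<in>vars_term (rs ! i). vars_at (\<mu>' x) (Px x)) \<subseteq> ?V"
      using vars_term_nth_subset[OF i] by blast
    ultimately show ?thesis
      by blast
  qed
  then obtain Q where Q: "\<And>i. i < length rs \<Longrightarrow>
      par_rstep R (Q i) (subst_apply (rs ! i) \<mu>) (subst_apply (rs ! i) \<mu>') \<and>
      vars_at (subst_apply (rs ! i) \<mu>') (Q i) \<subseteq> ?V"
    by metis
  have "par_rstep R (\<Union>i<length (map (\<lambda>s. subst_apply s \<mu>) rs). (#) i ` Q i)
     (Fun f (map (\<lambda>s. subst_apply s \<mu>) rs)) (Fun f (map (\<lambda>s. subst_apply s \<mu>') rs))"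
    using Q by (intro par_rstep.args) auto
  moreover have "vars_at (Fun f (map (\<lambda>s. subst_apply s \<mu>') rs)) (\<Union>i<length rs. (#) i ` Q i)
      = (\<Union>i<length rs. vars_at (subst_apply (rs ! i) \<mu>') (Q i))"
    by (subst vars_at_Fun) auto
  moreover have "(\<Union>i<length rs. vars_at (subst_apply (rs ! i) \<mu>') (Q i)) \<subseteq> ?V"
    using Q by blast
  ultimately have "par_rstep R (\<Union>i<length rs. (#) i ` Q i) (subst_apply (Fun f rs) \<mu>) (subst_apply (Fun f rs) \<mu>') \<and>
      vars_at (subst_apply (Fun f rs) \<mu>') (\<Union>i<length rs. (#) i ` Q i) \<subseteq> ?V"
    by simp
  then show ?case
    by blast
qed

lemma par_rstep_below_linear_lhsE:
  assumes lin: "linear_term l" and rl: "vars_term r \<subseteq> vars_term l"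
    and step: "par_rstep R P (subst_apply l \<mu>) t" and below: "P \<inter> funposs l = {}"
  obtains \<mu>' Q where "t = subst_apply l \<mu>'" "par_rstep R Q (subst_apply r \<mu>) (subst_apply r \<mu>')"
    "vars_at (subst_apply r \<mu>') Q \<subseteq> vars_at t P"
proof -
  obtain \<mu>' Px where t: "t = subst_apply l \<mu>'"
    and Px: "\<And>x. x \<in> vars_term l \<Longrightarrow> par_rstep R (Px x) (\<mu> x) (\<mu>' x) \<and> vars_at (\<mu>' x) (Px x) \<subseteq> vars_at t P"
    using par_rstep_subst_apply_linear[OF lin step below] by blast
  have "x \<in> vars_term r \<Longrightarrow> par_rstep R (Px x) (\<mu> x) (\<mu>' x)" for x
    using Px rl by blast
  from par_rstep_subst_apply_args[where r = r and Px = Px and \<mu> = \<mu> and \<mu>' = \<mu>', OF this] obtain Q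
    where Q: "par_rstep R Q (subst_apply r \<mu>) (subst_apply r \<mu>')"
      "vars_at (subst_apply r \<mu>') Q \<subseteq> (\<Union>x\<in>vars_term r. vars_at (\<mu>' x) (Px x))"
    by blast
  have "vars_at (subst_apply r \<mu>') Q \<subseteq> vars_at t P"
    using Q(2) Px rl by blast
  with t Q(1) show thesis
    by (rule that)
qed

section \<open>The overlap measure\<close>

fun num_symbols :: "('f, 'v) term \<Rightarrow> nat" where
  "num_symbols (Var x) = 1"
| "num_symbols (Fun f ts) = Suc (sum_list (map num_symbols ts))"

definition nested_positions :: "pos set \<Rightarrow> pos set \<Rightarrow> pos set" where
  "nested_positions A B = {q \<in> A \<union> B. \<exists>q' \<in> A \<union> B. strict_prefix q' q}"

definition overlap_measure :: "('f, 'v) term \<Rightarrow> pos set \<Rightarrow> pos set \<Rightarrow> nat" where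
  "overlap_measure s A B = (\<Sum>q\<in>nested_positions A B. num_symbols (subt_at s q))"

lemma num_symbols_pos: "num_symbols t > 0"
  by (cases t) auto

lemma num_symbols_arg_less: "i < length ts \<Longrightarrow> num_symbols (ts ! i) < num_symbols (Fun f ts)"
  using elem_le_sum_list[of i "map num_symbols ts"] by simp

lemma overlap_measure_commute: "overlap_measure s A B = overlap_measure s B A"
  unfolding overlap_measure_def nested_positions_def by (simp add: Un_commute)

lemma sum_num_symbols_parallel_le:
  "pairwise_parallel Q \<Longrightarrow> Q \<subseteq> poss t \<Longrightarrow> (\<Sum>q\<in>Q. num_symbols (subt_at t q)) \<le> num_symbols t"
proof (induction t arbitrary: Q)
  case (Var x)
  then have "Q = {} \<or> Q = {[]}"
    by auto
  then show ?case
    by auto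
next
  case (Fun f ts)
  show ?case
  proof (cases "[] \<in> Q")
    case True
    with Fun.prems(1) have "Q = {[]}"
      by (rule pairwise_parallel_root)
    then show ?thesis
      by simp
  next
    case False
    let ?n = "length ts"
    let ?Qi = "\<lambda>i. {q. i # q \<in> Q}"
    have fin: "finite ((#) i ` ?Qi i)" if "i < ?n" for i
      using Fun.prems(2) that by (intro finite_imageI finite_subset_poss[of _ "ts ! i"]) auto
    have "(\<Sum>q\<in>Q. num_symbols (subt_at (Fun f ts) q)) =
        (\<Sum>i<?n. \<Sum>q\<in>(#) i ` ?Qi i. num_symbols (subt_at (Fun f ts) q))"
      by (subst UN_Cons_slices[OF Fun.prems(2) False], rule sum.UNION_disjoint) (use fin in auto)
    also have "\<dots> = (\<Sum>i<?n. \<Sum>q\<in>?Qi i. num_symbols (subt_at (ts ! i) q))"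
      by (simp add: sum.reindex)
    also have "\<dots> \<le> (\<Sum>i<?n. num_symbols (ts ! i))"
    proof (rule sum_mono)
      fix i
      assume i: "i \<in> {..<?n}"
      show "(\<Sum>q\<in>?Qi i. num_symbols (subt_at (ts ! i) q)) \<le> num_symbols (ts ! i)"
        using Fun.prems(2) i by (intro Fun.IH pairwise_parallel_slice[OF Fun.prems(1)]) auto
    qed
    also have "\<dots> < num_symbols (Fun f ts)"
      by (simp add: sum_list_sum_nth atLeast0LessThan)
    finally show ?thesis
      by simp
  qed
qed

lemma sum_num_symbols_below_le:
  assumes a: "a \<in> poss s" and B: "pairwise_parallel B" "B \<subseteq> poss s"
  shows "(\<Sum>b\<in>{b \<in> B. strict_prefix a b}. num_symbols (subt_at s b)) \<le> num_symbols (subt_at s a)"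
proof -
  define Q where "Q = {r. a @ r \<in> B \<and> r \<noteq> []}"
  have below: "{b \<in> B. strict_prefix a b} = (@) a ` Q"
    unfolding Q_def by (auto simp: strict_prefix_def prefix_def)
  have "pairwise_parallel Q"
    unfolding pairwise_parallel_def Q_def
  proof clarify
    fix p q
    assume "a @ p \<in> B" "a @ q \<in> B" "p \<noteq> q"
    then have "parallel_pos (a @ p) (a @ q)"
      using B(1) unfolding pairwise_parallel_def by auto
    then show "parallel_pos p q"
      by (simp add: parallel_pos_def)
  qed
  moreover have "Q \<subseteq> poss (subt_at s a)"
    using B(2) poss_append[OF a] unfolding Q_def by auto
  ultimately have "(\<Sum>r\<in>Q. num_symbols (subt_at (subt_at s a) r)) \<le> num_symbols (subt_at s a)"
    by (rule sum_num_symbols_parallel_le)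
  then show ?thesis
    unfolding below using poss_append[OF a] by (simp add: sum.reindex inj_on_def)
qed

lemma nested_positions_below_outermost:
  assumes A: "pairwise_parallel A" and B: "pairwise_parallel B"
    and b: "b \<in> nested_positions A B" "b \<notin> A"
  obtains a where "a \<in> A - nested_positions A B" "b \<in> B" "strict_prefix a b"
proof -
  have no_chain: "\<not> strict_prefix x y" if "x \<in> C" "y \<in> C" "pairwise_parallel C" for C x y
    using that unfolding pairwise_parallel_def parallel_pos_def strict_prefix_def by blast
  from b have bB: "b \<in> B" and "\<exists>a \<in> A \<union> B. strict_prefix a b"
    unfolding nested_positions_def by auto
  then obtain a where a: "a \<in> A" "strict_prefix a b"
    using no_chain[OF _ _ B] by blast
  have "a \<notin> nested_positions A B"
  proof
    assume "a \<in> nested_positions A B"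
    then obtain c where "c \<in> A \<union> B" "strict_prefix c a"
      unfolding nested_positions_def by auto
    then show False
      using no_chain[OF _ _ A] no_chain[OF _ _ B] a bB prefix_order.less_trans by blast
  qed
  with a bB show thesis
    using that by blast
qed

lemma overlap_measure_le:
  assumes A: "pairwise_parallel A" "A \<subseteq> poss s" and B: "pairwise_parallel B" "B \<subseteq> poss s"
  shows "overlap_measure s A B \<le> (\<Sum>a\<in>A. num_symbols (subt_at s a))"
proof -
  let ?f = "\<lambda>q. num_symbols (subt_at s q)"
  let ?N = "nested_positions A B"
  let ?outer = "A - ?N"
  let ?below = "\<lambda>a. {b \<in> B. strict_prefix a b}"
  have finA: "finite A" and finB: "finite B"
    using A(2) B(2) finite_subset_poss by blast+
  have finN: "finite ?N"
    using finA finB unfolding nested_positions_def by auto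
  have "?N - A \<subseteq> (\<Union>a\<in>?outer. ?below a)"
    using nested_positions_below_outermost[OF A(1) B(1)] by blast
  then have "sum ?f (?N - A) \<le> sum ?f (\<Union>a\<in>?outer. ?below a)"
    using finA finB by (intro sum_mono2) auto
  also have "\<dots> = (\<Sum>a\<in>?outer. sum ?f (?below a))"
  proof (rule sum.UNION_disjoint)
    show "\<forall>a\<in>?outer. \<forall>a'\<in>?outer. a \<noteq> a' \<longrightarrow> ?below a \<inter> ?below a' = {}"
      using A(1) unfolding pairwise_parallel_def parallel_pos_def
      by (auto simp: strict_prefix_def dest: prefix_same_cases)
  qed (use finA finB in auto)
  also have "\<dots> \<le> sum ?f ?outer"
    using sum_num_symbols_below_le A B by (intro sum_mono) blast
  finally have "sum ?f (?N - A) \<le> sum ?f ?outer" .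
  moreover have "overlap_measure s A B = sum ?f (?N \<inter> A) + sum ?f (?N - A)"
    unfolding overlap_measure_def using finN by (metis sum.Int_Diff)
  moreover have "sum ?f A = sum ?f (?N \<inter> A) + sum ?f ?outer"
    using finA by (metis Int_commute sum.Int_Diff)
  ultimately show ?thesis
    by linarith
qed

lemma overlap_measure_root:
  "[] \<notin> A \<Longrightarrow> overlap_measure s A {[]} = (\<Sum>a\<in>A. num_symbols (subt_at s a))"
  unfolding overlap_measure_def nested_positions_def
  by (rule sum.cong) (auto simp: strict_prefix_def)

lemma overlap_measure_arg_le:
  assumes A: "A \<subseteq> poss (Fun f ss)" and B: "B \<subseteq> poss (Fun f ss)" and i: "i < length ss"
  shows "overlap_measure (ss ! i) {q. i # q \<in> A} {q. i # q \<in> B} \<le> overlap_measure (Fun f ss) A B"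
proof -
  have "finite (nested_positions A B)"
    using A B finite_subset_poss unfolding nested_positions_def by (metis (no_types, lifting) finite_Un mem_Collect_eq rev_finite_subset subsetI)
  moreover have "(#) i ` nested_positions {q. i # q \<in> A} {q. i # q \<in> B} \<subseteq> nested_positions A B"
  proof
    fix x
    assume "x \<in> (#) i ` nested_positions {q. i # q \<in> A} {q. i # q \<in> B}"
    then obtain q q' where "x = i # q" "i # q \<in> A \<union> B" "i # q' \<in> A \<union> B" "strict_prefix q' q"
      unfolding nested_positions_def by blast
    moreover from this have "strict_prefix (i # q') (i # q)"
      by simp
    ultimately show "x \<in> nested_positions A B"
      unfolding nested_positions_def by blast
  qed
  ultimately have "(\<Sum>q\<in>(#) i ` nested_positions {q. i # q \<in> A} {q. i # q \<in> B}. num_symbols (subt_at (Fun f ss) q))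
      \<le> overlap_measure (Fun f ss) A B"
    unfolding overlap_measure_def by (intro sum_mono2) auto
  then show ?thesis
    unfolding overlap_measure_def by (simp add: sum.reindex)
qed

lemma overlap_measure_replace_less:
  assumes A: "pairwise_parallel A" "A \<subseteq> poss s" "[] \<notin> A" and p: "p \<in> A"
    and Q: "pairwise_parallel Q" "Q \<subseteq> poss (replace_at s p x)"
    and A': "A - {p} \<subseteq> poss (replace_at s p x)"
  shows "overlap_measure (replace_at s p x) (A - {p}) Q < overlap_measure s A {[]}"
proof -
  have finA: "finite A"
    using A(2) finite_subset_poss by blast
  have "overlap_measure (replace_at s p x) (A - {p}) Q \<le> (\<Sum>a\<in>A - {p}. num_symbols (subt_at (replace_at s p x) a))"
    using pairwise_parallel_subset[OF A(1)] A' Q by (intro overlap_measure_le) auto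
  also have "\<dots> = (\<Sum>a\<in>A - {p}. num_symbols (subt_at s a))"
  proof (rule sum.cong[OF refl])
    fix a
    assume "a \<in> A - {p}"
    then have "parallel_pos p a"
      using A(1) p unfolding pairwise_parallel_def by auto
    then show "num_symbols (subt_at (replace_at s p x) a) = num_symbols (subt_at s a)"
      using parallel_pos_replace_at A(2) p by (metis subsetD)
  qed
  also have "\<dots> < (\<Sum>a\<in>A. num_symbols (subt_at s a))"
    using sum.remove[OF finA p, of "\<lambda>a. num_symbols (subt_at s a)"] num_symbols_pos[of "subt_at s p"] by linarith
  also have "\<dots> = overlap_measure s A {[]}"
    by (rule overlap_measure_root[OF A(3), symmetric])
  finally show ?thesis .
qed

section \<open>Closing parallel peaks\<close>

text \<open>Conclusion (i) for the peak \<open>t \<Leftarrow>\<^sub>A s \<Rightarrow> u\<close>.\<close>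

definition par_closable :: "('f, 'v) trs \<Rightarrow> ('f, 'v) term \<Rightarrow> pos set \<Rightarrow> ('f, 'v) term \<Rightarrow> ('f, 'v) term \<Rightarrow> bool" where
  "par_closable R s A t u \<longleftrightarrow>
    (\<exists>v P'. (t, v) \<in> (rstep R)\<^sup>* \<and> par_rstep R P' u v \<and> vars_at v P' \<subseteq> vars_at s A)"

lemma par_closableI:
  "(t, v) \<in> (rstep R)\<^sup>* \<Longrightarrow> par_rstep R P' u v \<Longrightarrow> vars_at v P' \<subseteq> vars_at s A \<Longrightarrow> par_closable R s A t u"
  unfolding par_closable_def by blast

lemma overlap_measure_induct [case_names less]:
  assumes "\<And>s A B. (\<And>s' A' B'. overlap_measure s' A' B' < overlap_measure s A B \<Longrightarrow> P s' A' B') \<Longrightarrow>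
    (\<And>s' A' B'. overlap_measure s' A' B' \<le> overlap_measure s A B \<Longrightarrow> num_symbols s' < num_symbols s \<Longrightarrow>
       P s' A' B') \<Longrightarrow> P s A B"
  shows "P s A B"
proof (induction "(s, A, B)" arbitrary: s A B
    rule: wf_induct_rule[OF wf_measures[of "[\<lambda>(s, A, B). overlap_measure s A B, \<lambda>(s, A, B). num_symbols s]"]])
  case 1
  show ?case
    by (rule assms; rule 1) (auto simp: in_measures)
qed

context almost_parallel_closed_trs
begin

lemma par_closable_root_root:
  assumes lr: "(l, r) \<in> R" and lr': "(l', r') \<in> R"
    and s: "s = subst_apply l \<mu>" "s = subst_apply l' \<mu>'"
  shows "par_closable R s {[]} (subst_apply r \<mu>) (subst_apply r' \<mu>')"
proof -
  obtain v Q where v: "par_rstep R Q (subst_apply r' \<mu>') v" "(subst_apply r \<mu>, v) \<in> (rstep R)\<^sup>*"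
    using root_overlap_joinable[OF lr lr'] s by metis
  have "vars_at v Q \<subseteq> vars_at (subst_apply r' \<mu>') Q"
    using par_rstep_vars_at[OF wf v(1)] .
  also have "\<dots> \<subseteq> vars_term (subst_apply r' \<mu>')"
    using par_rstep_poss[OF v(1)] by (rule vars_at_subset_vars_term)
  also have "\<dots> \<subseteq> vars_at s {[]}"
    using par_rstep_vars_term[OF wf par_rstep.root[OF lr']] s(2) by (simp add: vars_at_root)
  finally show ?thesis
    using v by (intro par_closableI)
qed

text \<open>Removing from a non-root parallel step the redex at a function position of the
  left-hand side of a root step: the critical pair at that position closes the resulting peak.\<close>

lemma inner_redex_overlap:
  assumes lr: "(l, r) \<in> R" and A: "par_rstep R A (subst_apply l \<mu>) t" and root: "[] \<notin> A"
    and p: "p \<in> A" "p \<in> funposs l"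
  obtains w Q where "par_rstep R (A - {p}) w t" "par_rstep R Q w (subst_apply r \<mu>)"
    "overlap_measure w (A - {p}) Q < overlap_measure (subst_apply l \<mu>) A {[]}"
    "vars_at w (A - {p}) \<subseteq> vars_at (subst_apply l \<mu>) A"
    "vars_term w \<subseteq> vars_term (subst_apply l \<mu>)"
proof -
  let ?s = "subst_apply l \<mu>"
  define w where "w = replace_at ?s p (subt_at t p)"
  have par: "pairwise_parallel A" and pos: "A \<subseteq> poss ?s"
    using A by (rule par_rstep_pairwise_parallel, rule par_rstep_poss)
  have pp: "p \<in> poss ?s" and pn: "p \<noteq> []"
    using p(1) pos root by auto
  obtain l1 r1 \<mu>1 where redex: "(l1, r1) \<in> R" "subt_at ?s p = subst_apply l1 \<mu>1" "subt_at t p = subst_apply r1 \<mu>1"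
    using par_rstep_redex[OF A p(1)] by blast
  obtain Q where Q: "par_rstep R Q w (subst_apply r \<mu>)"
    unfolding w_def redex(3) by (rule inner_overlap_par_rstep[OF lr redex(1) p(2) pn redex(2)])
  have A': "par_rstep R (A - {p}) w t"
    unfolding w_def by (rule par_rstep_remove_redex[OF A p(1)])
  have "overlap_measure w (A - {p}) Q < overlap_measure ?s A {[]}"
    using overlap_measure_replace_less[OF par pos root p(1) par_rstep_pairwise_parallel[OF Q]]
      par_rstep_poss[OF Q] par_rstep_poss[OF A'] unfolding w_def by blast
  moreover have "vars_at w (A - {p}) \<subseteq> vars_at ?s A"
  proof -
    have "subt_at w a = subt_at ?s a" if a: "a \<in> A - {p}" for a
    proof -
      have "parallel_pos p a"
        using a par p(1) unfolding pairwise_parallel_def by (metis DiffD1 DiffD2 singletonI)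
      then show ?thesis
        unfolding w_def using parallel_pos_replace_at[OF _ pp] by blast
    qed
    then show ?thesis
      unfolding vars_at_def by auto
  qed
  moreover have "vars_term w \<subseteq> vars_term ?s"
  proof -
    have "vars_term (subt_at t p) \<subseteq> vars_term (subt_at ?s p)"
      using vars_rhs_subset[OF redex(1)] unfolding redex(2,3) vars_term_subst by blast
    then show ?thesis
      unfolding w_def using vars_replace_at_subset[OF pp] vars_subt_at_subset[OF pp] by blast
  qed
  ultimately show thesis
    by (rule that[OF A' Q])
qed

lemma par_closable_inner_root:
  assumes lr: "(l, r) \<in> R" and s: "s = subst_apply l \<mu>"
    and A: "par_rstep R A s t" and root: "[] \<notin> A"
    and IH: "\<And>s' A' B' t' u'. overlap_measure s' A' B' < overlap_measure s A {[]} \<Longrightarrow>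
      par_rstep R A' s' t' \<Longrightarrow> par_rstep R B' s' u' \<Longrightarrow> par_closable R s' A' t' u'"
  shows "par_closable R s A t (subst_apply r \<mu>)"
proof (cases "A \<inter> funposs l = {}")
  case True
  then obtain \<mu>' Q where t: "t = subst_apply l \<mu>'" and Q: "par_rstep R Q (subst_apply r \<mu>) (subst_apply r \<mu>')"
      "vars_at (subst_apply r \<mu>') Q \<subseteq> vars_at t A"
    using par_rstep_below_linear_lhsE[OF linear_lhs[OF lr] vars_rhs_subset[OF lr]] A s by metis
  have "(t, subst_apply r \<mu>') \<in> (rstep R)\<^sup>*"
    unfolding t using rstep_root[OF lr] by blast
  moreover have "vars_at (subst_apply r \<mu>') Q \<subseteq> vars_at s A"
    using Q(2) par_rstep_vars_at[OF wf A] by blast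
  ultimately show ?thesis
    using Q(1) by (intro par_closableI)
next
  case False
  then obtain p where p: "p \<in> A" "p \<in> funposs l"
    by blast
  obtain w Q where w: "par_rstep R (A - {p}) w t" "par_rstep R Q w (subst_apply r \<mu>)"
    "overlap_measure w (A - {p}) Q < overlap_measure s A {[]}" "vars_at w (A - {p}) \<subseteq> vars_at s A"
    using inner_redex_overlap[OF lr A[unfolded s] root p] s by metis
  with IH show ?thesis
    unfolding par_closable_def by blast
qed

lemma par_closable_root_inner:
  assumes lr: "(l, r) \<in> R" and s: "s = subst_apply l \<mu>"
    and B: "par_rstep R B s u" and root: "[] \<notin> B"
    and IH: "\<And>s' A' B' t' u'. overlap_measure s' A' B' < overlap_measure s {[]} B \<Longrightarrow>
      par_rstep R A' s' t' \<Longrightarrow> par_rstep R B' s' u' \<Longrightarrow> par_closable R s' A' t' u'"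
  shows "par_closable R s {[]} (subst_apply r \<mu>) u"
proof (cases "B \<inter> funposs l = {}")
  case True
  then obtain \<mu>' Q where u: "u = subst_apply l \<mu>'" and Q: "par_rstep R Q (subst_apply r \<mu>) (subst_apply r \<mu>')"
    using par_rstep_below_linear_lhsE[OF linear_lhs[OF lr] vars_rhs_subset[OF lr]] B s by metis
  have u_step: "par_rstep R {[]} u (subst_apply r \<mu>')"
    unfolding u by (rule par_rstep.root[OF lr])
  have "vars_at (subst_apply r \<mu>') {[]} \<subseteq> vars_at s {[]}"
    using par_rstep_vars_term[OF wf u_step] par_rstep_vars_term[OF wf B] by (simp add: vars_at_root)
  with par_rstep_imp_rsteps[OF Q] u_step show ?thesis
    by (rule par_closableI)
next
  case False
  then obtain p where p: "p \<in> B" "p \<in> funposs l"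
    by blast
  obtain w Q where w: "par_rstep R (B - {p}) w u" "par_rstep R Q w (subst_apply r \<mu>)"
    "overlap_measure w (B - {p}) Q < overlap_measure s B {[]}" "vars_term w \<subseteq> vars_term s"
    using inner_redex_overlap[OF lr B[unfolded s] root p] s by metis
  then have "par_closable R w Q (subst_apply r \<mu>) u"
    by (intro IH) (simp_all add: overlap_measure_commute)
  then obtain v P' where v: "(subst_apply r \<mu>, v) \<in> (rstep R)\<^sup>*" "par_rstep R P' u v" "vars_at v P' \<subseteq> vars_at w Q"
    unfolding par_closable_def by blast
  have "vars_at w Q \<subseteq> vars_at s {[]}"
    using vars_at_subset_vars_term[OF par_rstep_poss[OF w(2)]] w(4) by (simp add: vars_at_root)
  with v show ?thesis
    by (intro par_closableI[OF v(1,2)]) auto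
qed

lemma par_closable_args:
  assumes A: "par_rstep R A (Fun f ss) t" and B: "par_rstep R B (Fun f ss) u"
    and root: "[] \<notin> A" "[] \<notin> B"
    and IH: "\<And>s' A' B' t' u'. overlap_measure s' A' B' \<le> overlap_measure (Fun f ss) A B \<Longrightarrow>
      num_symbols s' < num_symbols (Fun f ss) \<Longrightarrow>
      par_rstep R A' s' t' \<Longrightarrow> par_rstep R B' s' u' \<Longrightarrow> par_closable R s' A' t' u'"
  shows "par_closable R (Fun f ss) A t u"
proof -
  let ?n = "length ss"
  obtain ts where ts: "t = Fun f ts" "length ts = ?n"
    "\<And>i. i < ?n \<Longrightarrow> par_rstep R {q. i # q \<in> A} (ss ! i) (ts ! i)"
    using par_rstep_FunE[OF A root(1)] by blast
  obtain us where us: "u = Fun f us" "length us = ?n"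
    "\<And>i. i < ?n \<Longrightarrow> par_rstep R {q. i # q \<in> B} (ss ! i) (us ! i)"
    using par_rstep_FunE[OF B root(2)] by blast
  have "par_closable R (ss ! i) {q. i # q \<in> A} (ts ! i) (us ! i)" if i: "i < ?n" for i
    using IH[OF overlap_measure_arg_le[OF par_rstep_poss[OF A] par_rstep_poss[OF B] i]
      num_symbols_arg_less[OF i] ts(3)[OF i] us(3)[OF i]] .
  then obtain V P where VP: "\<And>i. i < ?n \<Longrightarrow> (ts ! i, V i) \<in> (rstep R)\<^sup>* \<and> par_rstep R (P i) (us ! i) (V i) \<and>
      vars_at (V i) (P i) \<subseteq> vars_at (ss ! i) {q. i # q \<in> A}"
    unfolding par_closable_def by metis
  define vs where "vs = map V [0..<?n]"
  have "(t, Fun f vs) \<in> (rstep R)\<^sup>*"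
    unfolding ts(1) by (rule rsteps_args) (use VP ts(2) in \<open>auto simp: vs_def\<close>)
  moreover have "par_rstep R (\<Union>i<length us. (#) i ` P i) u (Fun f vs)"
    unfolding us(1) by (rule par_rstep.args) (use VP us(2) in \<open>auto simp: vs_def\<close>)
  moreover have "vars_at (Fun f vs) (\<Union>i<length us. (#) i ` P i) \<subseteq> vars_at (Fun f ss) A"
  proof -
    have "vars_at (Fun f vs) (\<Union>i<length us. (#) i ` P i) = (\<Union>i<?n. vars_at (V i) (P i))"
      using us(2) by (subst vars_at_Fun) (auto simp: vs_def)
    also have "\<dots> \<subseteq> (\<Union>i<?n. vars_at (ss ! i) {q. i # q \<in> A})"
      using VP by blast
    also have "\<dots> = vars_at (Fun f ss) A"
      by (subst (2) UN_Cons_slices[OF par_rstep_poss[OF A] root(1)]) (rule vars_at_Fun[symmetric], simp)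
    finally show ?thesis .
  qed
  ultimately show ?thesis
    by (rule par_closableI)
qed

lemma par_closable_peak: "par_rstep R A s t \<Longrightarrow> par_rstep R B s u \<Longrightarrow> par_closable R s A t u"
proof (induction s A B arbitrary: t u rule: overlap_measure_induct)
  case (less s A B)
  show ?case
  proof (cases "[] \<in> A"; cases "[] \<in> B")
    assume "[] \<in> A" "[] \<in> B"
    with less.prems obtain l r \<mu> l' r' \<mu>' where "A = {[]}" "(l, r) \<in> R" "s = subst_apply l \<mu>" "t = subst_apply r \<mu>"
      "(l', r') \<in> R" "s = subst_apply l' \<mu>'" "u = subst_apply r' \<mu>'"
      by (metis par_rstep_rootE)
    then show ?thesis
      using par_closable_root_root by blast
  next
    assume "[] \<in> A" "[] \<notin> B"
    from less.prems(1) \<open>[] \<in> A\<close> obtain l r \<mu> where "A = {[]}" "(l, r) \<in> R" "s = subst_apply l \<mu>" "t = subst_apply r \<mu>"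
      by (rule par_rstep_rootE)
    with less.prems(2) \<open>[] \<notin> B\<close> less.IH(1) show ?thesis
      by (simp add: par_closable_root_inner)
  next
    assume "[] \<notin> A" "[] \<in> B"
    from less.prems(2) \<open>[] \<in> B\<close> obtain l r \<mu> where "B = {[]}" "(l, r) \<in> R" "s = subst_apply l \<mu>" "u = subst_apply r \<mu>"
      by (rule par_rstep_rootE)
    with less.prems(1) \<open>[] \<notin> A\<close> less.IH(1) show ?thesis
      by (simp add: par_closable_inner_root)
  next
    assume root: "[] \<notin> A" "[] \<notin> B"
    show ?thesis
    proof (cases s)
      case (Var x)
      then have "t = s" "u = s"
        using less.prems par_rstep_VarD[OF wf] by blast+
      then show ?thesis
        by (intro par_closableI[where P' = "{}"]) (auto simp: vars_at_def intro: par_rstep.empty)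
    next
      case (Fun f ss)
      show ?thesis
        unfolding Fun by (rule par_closable_args[OF less.prems[unfolded Fun] root less.IH(2)[unfolded Fun]])
    qed
  qed
qed

end

theorem lemma4:
  fixes R :: "('f, 'v) trs"
  assumes "infinite (UNIV :: 'v set)"
    and "wf_trs R"
    and "left_linear R"
    and "almost_parallel_closed R"
    and "par_step R P1 s t"
    and "par_step R P2 s u"
  shows "(\<exists>v1 P1'. (t, v1) \<in> (rstep R)\<^sup>* \<and> par_step R P1' u v1 \<and> vars_at v1 P1' \<subseteq> vars_at s P1)
       \<and> (\<exists>v2 P2'. par_step R P2' t v2 \<and> (u, v2) \<in> (rstep R)\<^sup>* \<and> vars_at v2 P2' \<subseteq> vars_at s P2)"
proof -
  interpret almost_parallel_closed_trs R
    by unfold_locales (fact assms)+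
  have t: "par_rstep R P1 s t" and u: "par_rstep R P2 s u"
    using assms(5,6) by (simp_all add: par_step_iff_par_rstep)
  obtain v1 P1' where "(t, v1) \<in> (rstep R)\<^sup>*" "par_rstep R P1' u v1" "vars_at v1 P1' \<subseteq> vars_at s P1"
    using par_closable_peak[OF t u] unfolding par_closable_def by blast
  moreover obtain v2 P2' where "(u, v2) \<in> (rstep R)\<^sup>*" "par_rstep R P2' t v2" "vars_at v2 P2' \<subseteq> vars_at s P2"
    using par_closable_peak[OF u t] unfolding par_closable_def by blast
  ultimately show ?thesis
    unfolding par_step_iff_par_rstep by blast
qed

end
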